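(* Let $T>0$, $0<\eta<T$ and $\alpha>\frac{1}{\eta}$. If $y\in C([0,T],[0,\infty))$, then the problem \[ u''(t)+y(t)=0,\quad t\in(0,T),\qquad u'(0)=0,\quad u(T)=\alpha\int_0^{\eta}u(s)\,ds \] has no positive solution.
   Context: A positive solution means a solution $u$ of the problem with $u(t)\ge 0$ for all $t\in[0,T]$ and $u$ not identically zero. *)

theory Defs
  imports "HOL-Analysis.Analysis"
begin

definition is_solution ::
  "real \<Rightarrow> real \<Rightarrow> real \<Rightarrow> (real \<Rightarrow> real) \<Rightarrow> (real \<Rightarrow> real) \<Rightarrow> bool" where
  "is_solution T \<eta> \<alpha> y u \<longleftrightarrow>
     (\<exists>u' u''.
        (\<forall>t\<in>{0..T}. (u has_real_derivative u' t) (at t within {0..T})) \<and>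
        continuous_on {0..T} u' \<and>
        (\<forall>t\<in>{0<..<T}. (u' has_real_derivative u'' t) (at t)) \<and>
        (\<forall>t\<in>{0<..<T}. u'' t + y t = 0) \<and>
        u' 0 = 0 \<and>
        u T = \<alpha> * integral {0..\<eta>} u)"

definition is_positive_solution ::
  "real \<Rightarrow> real \<Rightarrow> real \<Rightarrow> (real \<Rightarrow> real) \<Rightarrow> (real \<Rightarrow> real) \<Rightarrow> bool" where
  "is_positive_solution T \<eta> \<alpha> y u \<longleftrightarrow>
     is_solution T \<eta> \<alpha> y u \<and> (\<forall>t\<in>{0..T}. u t \<ge> 0) \<and> (\<exists>t\<in>{0..T}. u t \<noteq> 0)"

end

theory Submission
  imports Defs
begin

text \<open>Since \<open>u'' = -y \<le> 0\<close> and \<open>u'(0) = 0\<close>, we have \<open>u' \<le> 0\<close>, so \<open>u\<close> is nonincreasing.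
  Hence \<open>\<integral>\<^sub>0\<^sup>\<eta> u \<ge> \<eta> u(\<eta>) \<ge> \<eta> u(T)\<close>, and the boundary condition gives
  \<open>u(T) \<ge> \<alpha>\<eta> u(T)\<close> with \<open>\<alpha>\<eta> > 1\<close>, forcing \<open>u(T) = 0\<close>. Then \<open>\<integral>\<^sub>0\<^sup>\<eta> u = 0\<close>, so the
  nonnegative continuous \<open>u\<close> vanishes at \<open>0\<close>, and monotonicity gives \<open>u = 0\<close>.\<close>

lemma antimono_on_Icc_if_deriv_nonpos:
  fixes f f' :: "real \<Rightarrow> real"
  assumes "continuous_on {a..b} f"
    and "\<And>x. x \<in> {a<..<b} \<Longrightarrow> (f has_real_derivative f' x) (at x)"
    and "\<And>x. x \<in> {a<..<b} \<Longrightarrow> f' x \<le> 0"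
  shows "antimono_on {a..b} f"
proof (rule monotone_onI)
  fix x z assume "x \<in> {a..b}" "z \<in> {a..b}" "x \<le> z"
  show "f z \<le> f x"
  proof (rule DERIV_nonpos_imp_decreasing_open[of x z f])
    show "x \<le> z" by fact
  next
    fix w assume "x < w" "w < z"
    then have "w \<in> {a<..<b}"
      using \<open>x \<in> {a..b}\<close> \<open>z \<in> {a..b}\<close> by auto
    then show "\<exists>d. (f has_real_derivative d) (at w) \<and> d \<le> 0"
      using assms(2,3) by blast
  next
    show "continuous_on {x..z} f"
      using \<open>x \<in> {a..b}\<close> \<open>z \<in> {a..b}\<close> by (auto intro: continuous_on_subset[OF assms(1)])
  qed
qed

lemma integral_ge_of_antimono_on:
  fixes f :: "real \<Rightarrow> real"
  assumes "antimono_on {a..b} f" and "f integrable_on {a..b}" and "a \<le> b"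
  shows "(b - a) * f b \<le> integral {a..b} f"
proof -
  have "integral {a..b} (\<lambda>_. f b) \<le> integral {a..b} f"
    using assms by (intro integral_le) (auto simp: monotone_on_def)
  then show ?thesis
    using \<open>a \<le> b\<close> by simp
qed

lemma continuous_nonneg_integral_eq_0_imp_0:
  fixes f :: "real \<Rightarrow> real"
  assumes "continuous_on {a..b} f" and "\<And>x. x \<in> {a..b} \<Longrightarrow> 0 \<le> f x"
    and "integral {a..b} f = 0" and "a < b" and "x \<in> {a..b}"
  shows "f x = 0"
proof -
  have "(f has_integral 0) (cbox a b)"
    using assms(1,3) integrable_continuous_real by (metis cbox_interval has_integral_integral)
  then show ?thesis
    using assms by (intro has_integral_0_cbox_imp_0[of a b f]) auto
qed

lemma solution_continuous_on:
  assumes "is_solution T \<eta> \<alpha> y u"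
  shows "continuous_on {0..T} u"
  using assms unfolding is_solution_def
  by (meson continuous_on_eq_continuous_within DERIV_continuous)

lemma solution_antimono_on:
  assumes sol: "is_solution T \<eta> \<alpha> y u" and y_nonneg: "\<forall>t\<in>{0<..<T}. 0 \<le> y t"
  shows "antimono_on {0..T} u"
proof -
  obtain u' u'' where
    u_deriv: "\<forall>t\<in>{0..T}. (u has_real_derivative u' t) (at t within {0..T})" and
    u'_cont: "continuous_on {0..T} u'" and
    u'_deriv: "\<forall>t\<in>{0<..<T}. (u' has_real_derivative u'' t) (at t)" and
    ode: "\<forall>t\<in>{0<..<T}. u'' t + y t = 0" and
    u'_0: "u' 0 = 0"
    using sol unfolding is_solution_def by blast
  have "antimono_on {0..T} u'"
    using u'_cont u'_deriv ode y_nonneg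
    by (intro antimono_on_Icc_if_deriv_nonpos[where f' = u'']) (auto simp: add_eq_0_iff)
  then have u'_nonpos: "u' t \<le> 0" if "t \<in> {0..T}" for t
    using that u'_0 by (force simp: monotone_on_def)
  have "(u has_real_derivative u' t) (at t)" if "t \<in> {0<..<T}" for t
    using u_deriv that at_within_Icc_at[of 0 t T]
    by (metis greaterThanLessThan_iff atLeastAtMost_iff less_imp_le)
  then show ?thesis
    using solution_continuous_on[OF sol] u'_nonpos
    by (intro antimono_on_Icc_if_deriv_nonpos[where f' = u']) auto
qed

lemma antimono_nonlocal_boundary_value_eq_0:
  fixes u :: "real \<Rightarrow> real"
  assumes anti: "antimono_on {0..T} u" and cont: "continuous_on {0..\<eta>} u"
    and "0 < \<eta>" and "\<eta> \<le> T" and \<alpha>\<eta>_gt_1: "\<alpha> * \<eta> > 1"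
    and uT_nonneg: "u T \<ge> 0" and bc: "u T = \<alpha> * integral {0..\<eta>} u"
  shows "u T = 0"
proof -
  have "\<eta> * u T \<le> \<eta> * u \<eta>"
    using anti assms(3,4) by (auto simp: monotone_on_def)
  also have "\<dots> \<le> integral {0..\<eta>} u"
  proof (rule integral_ge_of_antimono_on[of 0 \<eta> u, simplified])
    show "antimono_on {0..\<eta>} u"
      using anti \<open>\<eta> \<le> T\<close> by (elim monotone_on_subset) auto
  qed (use cont \<open>0 < \<eta>\<close> integrable_continuous_real in auto)
  finally have integral_ge: "\<eta> * u T \<le> integral {0..\<eta>} u" .
  have "\<alpha> > 0"
    using \<alpha>\<eta>_gt_1 \<open>0 < \<eta>\<close> by (smt (verit) mult_nonpos_nonneg)
  then have "\<alpha> * \<eta> * u T \<le> u T"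
    using mult_left_mono[OF integral_ge] by (simp add: bc mult.assoc)
  then have "(\<alpha> * \<eta> - 1) * u T \<le> 0"
    by (simp add: algebra_simps)
  then show "u T = 0"
    using \<alpha>\<eta>_gt_1 uT_nonneg by (simp add: mult_le_0_iff)
qed

theorem lemma2p3:
  fixes T \<eta> \<alpha> :: real and y :: "real \<Rightarrow> real"
  assumes "T > 0" and "0 < \<eta>" and "\<eta> < T" and "\<alpha> > 1 / \<eta>"
    and "continuous_on {0..T} y" and "\<forall>t\<in>{0..T}. y t \<ge> 0"
  shows "\<not> (\<exists>u. is_positive_solution T \<eta> \<alpha> y u)"
proof
  assume "\<exists>u. is_positive_solution T \<eta> \<alpha> y u"
  then obtain u where sol: "is_solution T \<eta> \<alpha> y u"
    and u_nonneg: "\<forall>t\<in>{0..T}. 0 \<le> u t" and u_nonzero: "\<exists>t\<in>{0..T}. u t \<noteq> 0"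
    unfolding is_positive_solution_def by blast
  have anti: "antimono_on {0..T} u"
    using solution_antimono_on[OF sol] assms(6) by auto
  have cont: "continuous_on {0..\<eta>} u"
    using solution_continuous_on[OF sol] assms(3) by (auto intro: continuous_on_subset)
  have bc: "u T = \<alpha> * integral {0..\<eta>} u"
    using sol unfolding is_solution_def by blast
  have "u T = 0"
    using antimono_nonlocal_boundary_value_eq_0[OF anti cont _ _ _ _ bc] u_nonneg assms(1-4)
    by (auto simp: field_simps)
  then have "integral {0..\<eta>} u = 0"
    using bc assms(2,4) by (auto simp: field_simps)
  then have "u 0 = 0"
    using continuous_nonneg_integral_eq_0_imp_0[OF cont] u_nonneg assms(2,3) by auto
  then have "u t = 0" if "t \<in> {0..T}" for t
    using anti u_nonneg that by (force simp: monotone_on_def)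
  with u_nonzero show False by blast
qed

end
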